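(* Let $f\in\mathbb{C}[x_0,\dots,x_3]_4$ be a quaternary quartic form that is not apolar to any quadric, and let $\Gamma\subset\mathbb{P}^3$ be a scheme of length ten apolar to $f$. Then $\Gamma$ imposes independent conditions on cubics, i.e. $I_{\Gamma,3}$ is $10$-dimensional.
   Context: $T=\mathbb{C}[y_0,\dots,y_3]$ acts on $S=\mathbb{C}[x_0,\dots,x_3]$ by differentiation; $f^\perp=\{g\in T:g(f)=0\}$; "not apolar to any quadric" means $f^\perp_2=0$. $\mathbb{P}^3=\mathbb{P}(S_1)$ has coordinate ring $T$, and $\Gamma$ is apolar to $f$ if its saturated ideal $I_\Gamma\subset f^\perp$. *)

theory Defs
  imports Complex_Main "HOL-Library.Poly_Mapping" "HOL-Library.Numeral_Type"
begin

text \<open>The same type is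
used both for S = C[x_0..x_3] and for T = C[y_0..y_3].\<close>

type_synonym mon = "4 \<Rightarrow>\<^sub>0 nat"
type_synonym pol = "mon \<Rightarrow>\<^sub>0 complex"

definition mdeg :: "mon \<Rightarrow> nat" where
  "mdeg m = (\<Sum>i\<in>UNIV. Poly_Mapping.lookup m i)"

definition forms :: "nat \<Rightarrow> pol set" where
  "forms d = {p. \<forall>m\<in>Poly_Mapping.keys p. mdeg m = d}"

definition cscale :: "complex \<Rightarrow> pol \<Rightarrow> pol" where
  "cscale c p = Poly_Mapping.map (\<lambda>x. c * x) p"

definition cdim :: "pol set \<Rightarrow> nat" where
  "cdim V = vector_space.dim cscale V"

text \<open>Apolarity action: y^a acts on x^b as the differential operator
  \<partial>^a, i.e. y^a (x^b) = (\<Prod>i. b_i!/(b_i-a_i)!) x^(b-a) if a \<le> b, else 0.\<close>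
definition dcoeff :: "mon \<Rightarrow> mon \<Rightarrow> complex" where
  "dcoeff a b = (if (\<forall>i. Poly_Mapping.lookup a i \<le> Poly_Mapping.lookup b i)
     then (\<Prod>i\<in>UNIV. of_nat (fact (Poly_Mapping.lookup b i) div fact (Poly_Mapping.lookup b i - Poly_Mapping.lookup a i)))
     else 0)"

definition contract :: "pol \<Rightarrow> pol \<Rightarrow> pol" where
  "contract g f = (\<Sum>a\<in>Poly_Mapping.keys g. \<Sum>b\<in>Poly_Mapping.keys f.
      Poly_Mapping.single (b - a) (Poly_Mapping.lookup g a * Poly_Mapping.lookup f b * dcoeff a b))"

definition perp :: "pol \<Rightarrow> pol set" where
  "perp f = {g. contract g f = 0}"

definition hcomp :: "nat \<Rightarrow> pol \<Rightarrow> pol" where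
  "hcomp d p = (\<Sum>m\<in>Poly_Mapping.keys p. if mdeg m = d then Poly_Mapping.single m (Poly_Mapping.lookup p m) else 0)"

definition homogeneous_ideal :: "pol set \<Rightarrow> bool" where
  "homogeneous_ideal I \<longleftrightarrow> 0 \<in> I \<and> (\<forall>p\<in>I. \<forall>q\<in>I. p + q \<in> I)
     \<and> (\<forall>p\<in>I. \<forall>r. r * p \<in> I) \<and> (\<forall>p\<in>I. \<forall>d. hcomp d p \<in> I)"

text \<open>Saturation with respect to the irrelevant ideal m = (y_0,..,y_3):
  I : m^\<infinity> = I, i.e. if all monomials of some degree k multiply g into I then g \<in> I.\<close>
definition saturated :: "pol set \<Rightarrow> bool" where
  "saturated I \<longleftrightarrow> (\<forall>g. (\<exists>k. \<forall>m. mdeg m = k \<longrightarrow> Poly_Mapping.single m 1 * g \<in> I) \<longrightarrow> g \<in> I)"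

text \<open>A zero-dimensional subscheme of P^3 of length n, given by its saturated homogeneous
  ideal: the Hilbert function of T/I_\<Gamma> is eventually equal to n.\<close>
definition scheme_ideal_of_length :: "nat \<Rightarrow> pol set \<Rightarrow> bool" where
  "scheme_ideal_of_length n I \<longleftrightarrow> homogeneous_ideal I \<and> saturated I \<and>
     (\<exists>d0. \<forall>d\<ge>d0. cdim (forms d) - cdim (I \<inter> forms d) = n)"

end

theory Submission
  imports Defs
begin

text \<open>The Hilbert function \<open>h\<close> of \<open>T/I\<^sub>\<Gamma>\<close> is \<open>10\<close> in degree \<open>2\<close>, since \<open>I\<^sub>\<Gamma> \<subseteq> f\<^sup>\<bottom>\<close>
  contains no quadric, and \<open>10\<close> in all large degrees, since \<open>\<Gamma>\<close> has length \<open>10\<close>; so it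
  suffices that \<open>h\<close> is non-decreasing. Multiplication by a linear form that is a nonzerodivisor
  modulo \<open>I\<^sub>\<Gamma>\<close> sends a complement of \<open>I\<^sub>\<Gamma>\<close> in \<open>T\<^sub>d\<close> injectively to a set that is
  independent modulo \<open>I\<^sub>\<Gamma>\<close> in \<open>T\<^sub>d\<^sub>+\<^sub>1\<close>. Such a form exists: the maximal spaces of linear
  forms annihilating a homogeneous element outside \<open>I\<^sub>\<Gamma>\<close> are proper subspaces by saturation,
  and they are finitely many, because elements with distinct maximal annihilators are
  independent modulo \<open>I\<^sub>\<Gamma>\<close> and, again by saturation, can be moved into one large degree,
  where at most \<open>10\<close> elements are independent. Over an infinite field, finitely many proper
  subspaces never cover the space of linear forms.\<close>

context vector_space
begin

lemma independent_card_le_dim_finite_span: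
  assumes "B \<subseteq> W" "independent B" "W \<subseteq> span X" "finite X"
  shows "finite B \<and> card B \<le> dim W"
proof -
  obtain B' where B': "B \<subseteq> B'" "B' \<subseteq> W" "independent B'" "W \<subseteq> span B'"
    using maximal_independent_subset_extend[OF assms(1,2)] by blast
  have "finite B'"
    using independent_span_bound[OF assms(4) B'(3)] B'(2) assms(3) by blast
  moreover have "card B' = dim W"
    using B' by (intro basis_card_eq_dim) auto
  ultimately show ?thesis
    using B'(1) by (metis card_mono finite_subset)
qed

lemma subspace_eq_if_dim_le:
  assumes "subspace S" "S \<subseteq> T" "T \<subseteq> span X" "finite X" "dim T \<le> dim S"
  shows "S = T"
proof (rule ccontr)
  assume "S \<noteq> T"
  then obtain t where t: "t \<in> T" "t \<notin> S" using assms(2) by blast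
  obtain B where B: "B \<subseteq> S" "independent B" "S \<subseteq> span B" "card B = dim S"
    using basis_exists by blast
  have "span B = S"
    using B assms(1) by (metis span_minimal subset_antisym)
  then have "independent (insert t B)"
    using t(2) B(2) by (intro independent_insertI) auto
  then have "finite (insert t B) \<and> card (insert t B) \<le> dim T"
    using t(1) B(1) assms(2-4) by (intro independent_card_le_dim_finite_span) auto
  then show False
    using t(2) B(1,4) assms(5) by (auto simp: card_insert_if split: if_splits)
qed

lemma subspace_avoids_finite_Union:
  assumes "infinite (UNIV :: 'a set)" "subspace W" "finite \<A>"
    and "\<And>L. L \<in> \<A> \<Longrightarrow> subspace L \<and> \<not> W \<subseteq> L"
  shows "\<exists>x\<in>W. x \<notin> \<Union>\<A>"
  using assms(3,4)
proof (induction rule: finite_induct)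
  case empty
  then show ?case using subspace_0[OF assms(2)] by blast
next
  case (insert L \<A>)
  then obtain x where x: "x \<in> W" "x \<notin> \<Union>\<A>" by blast
  obtain y where y: "y \<in> W" "y \<notin> L" using insert.prems by blast
  show ?case
  proof (rule ccontr)
    assume "\<not> ?thesis"
    then have covered: "W \<subseteq> L \<union> \<Union>\<A>" by blast
    have "x \<in> L" using covered x by blast
    \<comment> \<open>The line through \<open>y\<close> in direction \<open>x\<close> misses \<open>L\<close> and meets each \<open>M \<in> \<A>\<close>
      at most once, so the scalars would inject into \<open>\<A>\<close>.\<close>
    have "\<exists>M\<in>\<A>. y + t *s x \<in> M" for t
    proof -
      have "y + t *s x \<in> W"
        using x(1) y(1) assms(2) by (simp add: subspace_add subspace_scale)
      moreover have "y + t *s x \<notin> L"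
        using y(2) \<open>x \<in> L\<close> insert.prems[of L]
        by (metis add_diff_cancel subspace_diff subspace_scale insertI1)
      ultimately show ?thesis using covered by blast
    qed
    then obtain M where M: "M t \<in> \<A>" "y + t *s x \<in> M t" for t
      by metis
    have "inj M"
    proof (rule injI)
      fix s t assume "M s = M t"
      then have "(y + s *s x) - (y + t *s x) \<in> M s"
        using M insert.prems by (metis subspace_diff insertCI)
      then have "(s - t) *s x \<in> M s"
        by (simp add: scale_left_diff_distrib)
      then have "s \<noteq> t \<Longrightarrow> x \<in> M s"
        using M(1) insert.prems subspace_scale[of "M s" "(s - t) *s x" "inverse (s - t)"]
        by simp
      then show "s = t" using x(2) M(1) by blast
    qed
    then show False
      using inj_on_finite[of M UNIV \<A>] M(1) insert.hyps(1) assms(1) by blast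
  qed
qed

end

lemma cscale_eq_mult: "cscale c p = Poly_Mapping.single 0 c * p"
  by (simp add: cscale_def mult_map_scale_conv_mult)

interpretation V: vector_space cscale
  by unfold_locales
    (simp_all add: cscale_eq_mult distrib_left distrib_right single_add mult_single flip: mult.assoc)

lemma mult_cscale_right: "p * cscale c q = cscale c (p * q)"
  by (simp add: cscale_eq_mult mult.left_commute)

lemma exhaust_4: "k = 0 \<or> k = 1 \<or> k = 2 \<or> k = (3 :: 4)"
proof (induct k)
  case (of_int z)
  then have "z = 0 \<or> z = 1 \<or> z = 2 \<or> z = 3" by fastforce
  then show ?case by auto
qed

lemma mdeg_eq_lookup_sum:
  "mdeg m = Poly_Mapping.lookup m 0 + Poly_Mapping.lookup m 1 + Poly_Mapping.lookup m 2 + Poly_Mapping.lookup m 3"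
proof -
  have UNIV_4: "UNIV = {0, 1, 2, 3 :: 4}" using exhaust_4 by blast
  show ?thesis unfolding mdeg_def UNIV_4 by (simp add: add.assoc)
qed

lemma mdeg_add: "mdeg (a + b) = mdeg a + mdeg b"
  unfolding mdeg_def lookup_add sum.distrib ..

lemma forms_subspace: "V.subspace (forms d)"
  unfolding V.subspace_def
proof (intro conjI ballI allI)
  show "0 \<in> forms d" by (simp add: forms_def)
  show "p + q \<in> forms d" if "p \<in> forms d" "q \<in> forms d" for p q
    using that keys_add[of p q] by (auto simp: forms_def)
  show "cscale c p \<in> forms d" if "p \<in> forms d" for c p
    using that by (auto simp: forms_def in_keys_iff cscale_def Poly_Mapping.map.rep_eq when_def)
qed

lemma forms_mult:
  assumes "p \<in> forms d" "q \<in> forms e"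
  shows "p * q \<in> forms (d + e)"
proof -
  have "mdeg m = d + e" if m: "m \<in> Poly_Mapping.keys (p * q)" for m
  proof -
    obtain a b where "m = a + b" "a \<in> Poly_Mapping.keys p" "b \<in> Poly_Mapping.keys q"
      using keys_mult[of p q] m by blast
    then show ?thesis using assms by (simp add: forms_def mdeg_add)
  qed
  then show ?thesis by (simp add: forms_def)
qed

definition monomial :: "mon \<Rightarrow> pol" where
  "monomial m = Poly_Mapping.single m 1"

lemma monomial_in_forms: "mdeg m = d \<Longrightarrow> monomial m \<in> forms d"
  by (simp add: forms_def monomial_def)

lemma inj_monomial: "inj monomial"
  by (rule injI) (metis monomial_def lookup_single_eq lookup_single_not_eq zero_neq_one)

lemma sum_single_lookup: "(\<Sum>m\<in>Poly_Mapping.keys p. Poly_Mapping.single m (Poly_Mapping.lookup p m)) = p"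
  by (rule poly_mapping_eqI)
    (simp add: lookup_sum lookup_single when_def in_keys_iff sum.If_cases)

lemma cscale_monomial: "cscale c (monomial m) = Poly_Mapping.single m c"
  by (simp add: cscale_def monomial_def)

lemma forms_subset_span_monomials: "forms d \<subseteq> V.span (monomial ` {m. mdeg m = d})"
proof
  fix p assume p: "p \<in> forms d"
  have "cscale (Poly_Mapping.lookup p m) (monomial m) \<in> V.span (monomial ` {m. mdeg m = d})"
    if "m \<in> Poly_Mapping.keys p" for m
    using that p unfolding forms_def by (intro V.span_scale V.span_base) blast
  then have "(\<Sum>m\<in>Poly_Mapping.keys p. Poly_Mapping.single m (Poly_Mapping.lookup p m))
      \<in> V.span (monomial ` {m. mdeg m = d})"
    by (intro V.span_sum) (simp add: cscale_monomial)
  then show "p \<in> V.span (monomial ` {m. mdeg m = d})"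
    by (simp only: sum_single_lookup)
qed

lemma bij_betw_monomials_exponent_tuples:
  "bij_betw (\<lambda>m. (Poly_Mapping.lookup m 0, Poly_Mapping.lookup m 1, Poly_Mapping.lookup m 2, Poly_Mapping.lookup m 3))
   {m. mdeg m = d} {(a, b, c, e). a + b + c + e = d}"
  (is "bij_betw ?exps _ _")
proof (rule bij_betwI')
  show "?exps m = ?exps m' \<longleftrightarrow> m = m'" for m m'
  proof
    assume "?exps m = ?exps m'"
    then have "Poly_Mapping.lookup m k = Poly_Mapping.lookup m' k" for k
      using exhaust_4[of k] by auto
    then show "m = m'" by (rule poly_mapping_eqI)
  qed simp
  show "?exps m \<in> {(a, b, c, e). a + b + c + e = d}" if "m \<in> {m. mdeg m = d}" for m
    using that by (simp add: mdeg_eq_lookup_sum)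
  show "\<exists>m\<in>{m. mdeg m = d}. t = ?exps m" if "t \<in> {(a, b, c, e). a + b + c + e = d}" for t
  proof -
    obtain a b c e where t: "t = (a, b, c, e)" by (cases t rule: prod_cases4)
    with that have "a + b + c + e = d" by simp
    let ?m = "Poly_Mapping.single 0 a + Poly_Mapping.single 1 b + Poly_Mapping.single 2 c + Poly_Mapping.single (3::4) e"
    have "t = ?exps ?m" "mdeg ?m = d"
      using t \<open>a + b + c + e = d\<close> by (simp_all add: lookup_add lookup_single mdeg_eq_lookup_sum)
    then show ?thesis by blast
  qed
qed

lemma finite_monomials: "finite {m :: mon. mdeg m = d}"
proof -
  have "finite {(a, b, c, e). a + b + c + e = (d::nat)}"
    by (rule finite_subset[of _ "{..d} \<times> {..d} \<times> {..d} \<times> {..d}"]) auto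
  then show ?thesis using bij_betw_finite bij_betw_monomials_exponent_tuples by blast
qed

lemma independent_monomials:
  assumes "finite M"
  shows "V.independent (monomial ` M)"
proof (rule V.independent_if_scalars_zero)
  show "finite (monomial ` M)" using assms by simp
  fix c x assume sum0: "(\<Sum>x\<in>monomial ` M. cscale (c x) x) = 0" and x: "x \<in> monomial ` M"
  then obtain m0 where m0: "m0 \<in> M" "x = monomial m0" by auto
  have "0 = Poly_Mapping.lookup (\<Sum>m\<in>M. Poly_Mapping.single m (c (monomial m))) m0"
    using sum0 inj_on_subset[OF inj_monomial] by (simp add: sum.reindex cscale_monomial)
  also have "\<dots> = c x"
    using m0 assms by (simp add: lookup_sum lookup_single when_def)
  finally show "c x = 0" by simp
qed

lemma cdim_forms: "cdim (forms d) = card {m. mdeg m = d}"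
proof -
  have "card (monomial ` {m. mdeg m = d}) = cdim (forms d)"
    unfolding cdim_def
    using forms_subset_span_monomials independent_monomials[OF finite_monomials]
    by (intro V.basis_card_eq_dim) (auto intro: monomial_in_forms)
  then show ?thesis by (simp add: card_image inj_on_subset[OF inj_monomial])
qed

lemma cdim_forms_eq_card_exponent_tuples:
  "cdim (forms d) = card (Set.filter (\<lambda>(a, b, c, e). a + b + c + e = d) ({..d} \<times> {..d} \<times> {..d} \<times> {..d}))"
proof -
  have "{(a, b, c, e). a + b + c + e = d}
      = Set.filter (\<lambda>(a, b, c, e). a + b + c + e = d) ({..d} \<times> {..d} \<times> {..d} \<times> {..d})"
    by auto
  then show ?thesis
    unfolding cdim_forms bij_betw_same_card[OF bij_betw_monomials_exponent_tuples] by (rule arg_cong)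
qed

lemma cdim_forms_2: "cdim (forms 2) = 10"
  unfolding cdim_forms_eq_card_exponent_tuples by code_simp

lemma cdim_forms_3: "cdim (forms 3) = 20"
  unfolding cdim_forms_eq_card_exponent_tuples by code_simp

lemma cdim_zero: "cdim {0} = 0"
  unfolding cdim_def using V.dim_span[of "{}"] V.dim_eq_card_independent[OF V.independent_empty] by simp

definition independent_mod :: "pol set \<Rightarrow> ('i \<Rightarrow> pol) \<Rightarrow> 'i set \<Rightarrow> bool" where
  "independent_mod I u A \<longleftrightarrow> (\<forall>c. (\<Sum>i\<in>A. cscale (c i) (u i)) \<in> I \<longrightarrow> (\<forall>i\<in>A. c i = 0))"

lemma independent_modD:
  "independent_mod I u A \<Longrightarrow> (\<Sum>i\<in>A. cscale (c i) (u i)) \<in> I \<Longrightarrow> i \<in> A \<Longrightarrow> c i = 0"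
  unfolding independent_mod_def by blast

lemma independent_mod_not_in:
  assumes "finite A" "independent_mod I u A" "i \<in> A"
  shows "u i \<notin> I"
proof
  assume "u i \<in> I"
  moreover have "(\<Sum>k\<in>A. cscale (if k = i then 1 else 0) (u k)) = (\<Sum>k\<in>A. if k = i then u k else 0)"
    by (rule sum.cong) simp_all
  ultimately have "(\<Sum>k\<in>A. cscale (if k = i then 1 else 0) (u k)) \<in> I"
    using assms(1,3) by simp
  then have "(\<lambda>k. if k = i then 1 else 0 :: complex) i = 0"
    by (rule independent_modD[OF assms(2) _ assms(3)])
  then show False by simp
qed

lemma independent_mod_inj_on:
  assumes "V.subspace I" "finite A" "independent_mod I u A"
  shows "inj_on u A"
proof (rule inj_onI)
  fix i j assume ij: "i \<in> A" "j \<in> A" "u i = u j"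
  show "i = j"
  proof (rule ccontr)
    assume "i \<noteq> j"
    let ?c = "\<lambda>k. if k = i then 1 else if k = j then -1 else (0::complex)"
    have "(\<Sum>k\<in>A. cscale (?c k) (u k)) = (\<Sum>k\<in>A. (if k = i then u i else 0) - (if k = j then u j else 0))"
      using \<open>i \<noteq> j\<close> by (intro sum.cong) auto
    also have "\<dots> = 0"
      using assms(2) ij by (simp add: sum_subtractf)
    finally have "(\<Sum>k\<in>A. cscale (?c k) (u k)) \<in> I"
      using V.subspace_0[OF assms(1)] by simp
    then have "?c i = 0"
      by (rule independent_modD[OF assms(3) _ ij(1)])
    then show False by simp
  qed
qed

lemma independent_mod_card_le:
  assumes I: "V.subspace I" and A: "finite A" "independent_mod I u A" "u ` A \<subseteq> F"
    and F: "F \<subseteq> V.span X" "finite X"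
  shows "card A + cdim (I \<inter> F) \<le> cdim F"
proof -
  obtain B where B: "B \<subseteq> I \<inter> F" "V.independent B" "I \<inter> F \<subseteq> V.span B" "card B = cdim (I \<inter> F)"
    unfolding cdim_def using V.basis_exists by blast
  have fin_B: "finite B"
    using V.independent_card_le_dim_finite_span[of B F X] B F by auto
  have disj: "u ` A \<inter> B = {}"
    using independent_mod_not_in[OF A(1,2)] B(1) by blast
  have "V.independent (u ` A \<union> B)"
  proof (rule V.independent_if_scalars_zero)
    show "finite (u ` A \<union> B)" using A(1) fin_B by simp
    fix f x assume sum0: "(\<Sum>x\<in>u ` A \<union> B. cscale (f x) x) = 0" and x: "x \<in> u ` A \<union> B"
    have split: "(\<Sum>x\<in>u ` A. cscale (f x) x) = - (\<Sum>x\<in>B. cscale (f x) x)"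
      using sum0 disj A(1) fin_B by (simp add: sum.union_disjoint eq_neg_iff_add_eq_0)
    have "(\<Sum>x\<in>B. cscale (f x) x) \<in> I"
      using B(1) by (intro V.subspace_sum[OF I] V.subspace_scale[OF I]) auto
    then have "(\<Sum>i\<in>A. cscale (f (u i)) (u i)) \<in> I"
      using split V.subspace_neg[OF I] independent_mod_inj_on[OF I A(1,2)]
      by (simp add: sum.reindex)
    then have on_A: "\<forall>x\<in>u ` A. f x = 0"
      using independent_modD[OF A(2), of "\<lambda>i. f (u i)"] by blast
    then have "(\<Sum>x\<in>u ` A. cscale (f x) x) = 0"
      by (intro sum.neutral) auto
    then have "(\<Sum>x\<in>B. cscale (f x) x) = 0"
      using split by simp
    then have "\<forall>x\<in>B. f x = 0"
      using V.independentD[OF B(2) fin_B] by blast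
    then show "f x = 0" using on_A x by blast
  qed
  then have "card (u ` A \<union> B) \<le> cdim F"
    unfolding cdim_def using V.independent_card_le_dim_finite_span[of "u ` A \<union> B" F X] A(3) B(1) F by auto
  then show ?thesis
    using disj A(1) fin_B B(4) independent_mod_inj_on[OF I A(1,2)]
    by (simp add: card_Un_disjoint card_image)
qed

lemma independent_mod_complement_exists:
  assumes I: "V.subspace I" and F: "V.subspace F" "F \<subseteq> V.span X" "finite X"
  obtains C where "C \<subseteq> F" "finite C" "independent_mod I (\<lambda>x. x) C" "card C + cdim (I \<inter> F) = cdim F"
proof -
  obtain B where B: "B \<subseteq> I \<inter> F" "V.independent B" "I \<inter> F \<subseteq> V.span B" "card B = cdim (I \<inter> F)"
    unfolding cdim_def using V.basis_exists by blast
  obtain B' where B': "B \<subseteq> B'" "B' \<subseteq> F" "V.independent B'" "F \<subseteq> V.span B'"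
    using V.maximal_independent_subset_extend[of B F] B(1,2) by blast
  have fin_B': "finite B'"
    using V.independent_card_le_dim_finite_span[OF B'(2,3) F(2,3)] by blast
  have "card B' = cdim F"
    unfolding cdim_def using B' by (intro V.basis_card_eq_dim) auto
  have fin_B: "finite B" using B'(1) fin_B' finite_subset by blast
  define C where "C = B' - B"
  have "independent_mod I (\<lambda>x. x) C"
    unfolding independent_mod_def
  proof (intro allI impI)
    fix c assume in_I: "(\<Sum>x\<in>C. cscale (c x) x) \<in> I"
    have "(\<Sum>x\<in>C. cscale (c x) x) \<in> F"
      using B'(2) unfolding C_def by (intro V.subspace_sum[OF F(1)] V.subspace_scale[OF F(1)]) auto
    then obtain u where u: "(\<Sum>x\<in>C. cscale (c x) x) = (\<Sum>x\<in>B. cscale (u x) x)"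
      using in_I B(3) V.span_finite[OF fin_B] by auto
    define g where "g x = (if x \<in> C then c x else - u x)" for x
    have B'_split: "B' = C \<union> B" "C \<inter> B = {}" using B'(1) unfolding C_def by auto
    have "(\<Sum>x\<in>B. cscale (g x) x) = (\<Sum>x\<in>B. - cscale (u x) x)"
      using B'_split(2) by (intro sum.cong) (auto simp: g_def)
    then have "(\<Sum>x\<in>B'. cscale (g x) x) = (\<Sum>x\<in>C. cscale (c x) x) - (\<Sum>x\<in>B. cscale (u x) x)"
      using B'_split fin_B fin_B' by (simp add: sum.union_disjoint g_def sum_negf)
    then have "\<forall>x\<in>B'. g x = 0"
      using u V.independentD[OF B'(3) fin_B'] by simp
    then show "\<forall>x\<in>C. c x = 0" unfolding g_def C_def by auto
  qed
  moreover have "card C + cdim (I \<inter> F) = cdim F"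
    using card_Diff_subset[OF fin_B B'(1)] card_mono[OF fin_B' B'(1)] \<open>card B' = cdim F\<close> B(4)
    unfolding C_def by linarith
  ultimately show ?thesis
    using that B'(2) fin_B' unfolding C_def by blast
qed

definition hilbert_function :: "pol set \<Rightarrow> nat \<Rightarrow> nat" where
  "hilbert_function I d = cdim (forms d) - cdim (I \<inter> forms d)"

definition homogeneous :: "pol \<Rightarrow> bool" where
  "homogeneous p \<longleftrightarrow> (\<exists>d. p \<in> forms d)"

lemma homogeneous_mult: "homogeneous p \<Longrightarrow> homogeneous q \<Longrightarrow> homogeneous (p * q)"
  unfolding homogeneous_def using forms_mult by blast

lemma homogeneous_ideal_subspace: "homogeneous_ideal I \<Longrightarrow> V.subspace I"
  unfolding homogeneous_ideal_def V.subspace_def cscale_eq_mult by blast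

lemma homogeneous_ideal_mult: "homogeneous_ideal I \<Longrightarrow> p \<in> I \<Longrightarrow> r * p \<in> I"
  unfolding homogeneous_ideal_def by blast

lemma hilbert_function_le_Suc_if_nonzerodivisor:
  assumes I: "homogeneous_ideal I" and l: "l \<in> forms 1"
    and nzd: "\<forall>g\<in>forms d. l * g \<in> I \<longrightarrow> g \<in> I"
  shows "hilbert_function I d \<le> hilbert_function I (Suc d)"
proof -
  have sub: "V.subspace I" using I by (rule homogeneous_ideal_subspace)
  obtain C where C: "C \<subseteq> forms d" "finite C" "independent_mod I (\<lambda>x. x) C"
    "card C + cdim (I \<inter> forms d) = cdim (forms d)"
    using independent_mod_complement_exists[OF sub forms_subspace forms_subset_span_monomials
        finite_imageI[OF finite_monomials]] by blast
  have "independent_mod I (\<lambda>x. l * x) C"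
    unfolding independent_mod_def
  proof (intro allI impI)
    fix c assume "(\<Sum>x\<in>C. cscale (c x) (l * x)) \<in> I"
    then have "l * (\<Sum>x\<in>C. cscale (c x) x) \<in> I"
      by (simp add: sum_distrib_left mult_cscale_right)
    moreover have "(\<Sum>x\<in>C. cscale (c x) x) \<in> forms d"
      using C(1) by (intro V.subspace_sum[OF forms_subspace] V.subspace_scale[OF forms_subspace]) auto
    ultimately have "(\<Sum>x\<in>C. cscale (c x) x) \<in> I"
      using nzd by blast
    then show "\<forall>x\<in>C. c x = 0"
      using independent_modD[OF C(3), of c] by blast
  qed
  moreover have "(\<lambda>x. l * x) ` C \<subseteq> forms (Suc d)"
    using C(1) forms_mult[OF l] by auto
  ultimately have "card C + cdim (I \<inter> forms (Suc d)) \<le> cdim (forms (Suc d))"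
    by (rule independent_mod_card_le[OF sub C(2) _ _ forms_subset_span_monomials
          finite_imageI[OF finite_monomials]])
  then show ?thesis
    using C(4) unfolding hilbert_function_def by linarith
qed

locale saturated_homogeneous_ideal =
  fixes I :: "pol set"
  assumes homogeneous_ideal: "homogeneous_ideal I" and saturated: "saturated I"
begin

lemma subspace_ideal: "V.subspace I"
  using homogeneous_ideal by (rule homogeneous_ideal_subspace)

lemma ideal_mult: "p \<in> I \<Longrightarrow> r * p \<in> I"
  using homogeneous_ideal by (rule homogeneous_ideal_mult)

lemma in_ideal_if_monomial_multiples:
  "(\<And>m. mdeg m = k \<Longrightarrow> monomial m * g \<in> I) \<Longrightarrow> g \<in> I"
  using saturated unfolding saturated_def monomial_def by blast

definition ann :: "pol \<Rightarrow> pol set" where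
  "ann b = {x \<in> forms 1. x * b \<in> I}"

text \<open>Maximal annihilators play the role of the associated primes of \<open>I\<close>, seen only through
  their linear forms.\<close>
definition ann_maximal :: "pol \<Rightarrow> bool" where
  "ann_maximal b \<longleftrightarrow> homogeneous b \<and> b \<notin> I \<and>
     (\<forall>b'. homogeneous b' \<and> b' \<notin> I \<longrightarrow> ann b \<subseteq> ann b' \<longrightarrow> ann b' = ann b)"

lemma ann_subset_forms: "ann b \<subseteq> forms 1"
  by (auto simp: ann_def)

lemma ann_subspace: "V.subspace (ann b)"
  unfolding V.subspace_def ann_def
proof (intro conjI ballI allI)
  show "0 \<in> {x \<in> forms 1. x * b \<in> I}"
    using V.subspace_0[OF forms_subspace] V.subspace_0[OF subspace_ideal] by simp
  show "x + y \<in> {x \<in> forms 1. x * b \<in> I}"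
    if "x \<in> {x \<in> forms 1. x * b \<in> I}" "y \<in> {x \<in> forms 1. x * b \<in> I}" for x y
    using that V.subspace_add[OF forms_subspace] V.subspace_add[OF subspace_ideal] by (auto simp: distrib_right)
  show "cscale c x \<in> {x \<in> forms 1. x * b \<in> I}" if "x \<in> {x \<in> forms 1. x * b \<in> I}" for c x
    using that V.subspace_scale[OF forms_subspace] V.subspace_scale[OF subspace_ideal]
    by (auto simp: mult.commute[of _ b] mult_cscale_right)
qed

lemma ann_mult: "ann b \<subseteq> ann (r * b)"
proof
  fix x assume "x \<in> ann b"
  then have "x \<in> forms 1" "r * (x * b) \<in> I" using ideal_mult by (auto simp: ann_def)
  then show "x \<in> ann (r * b)" by (simp add: ann_def mult.left_commute)
qed

lemma forms_1_not_subset_ann: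
  assumes "b \<notin> I"
  shows "\<not> forms 1 \<subseteq> ann b"
proof
  assume "forms 1 \<subseteq> ann b"
  then have "monomial m * b \<in> I" if "mdeg m = 1" for m
    using monomial_in_forms[OF that] by (auto simp: ann_def)
  then show False using in_ideal_if_monomial_multiples assms by blast
qed

lemma ann_maximal_exists:
  assumes "homogeneous a" "a \<notin> I"
  obtains b where "ann_maximal b" "ann a \<subseteq> ann b"
proof -
  define K where "K = {b. homogeneous b \<and> b \<notin> I \<and> ann a \<subseteq> ann b}"
  define N where "N = (\<lambda>b. cdim (ann b)) ` K"
  have "cdim (ann b) \<le> card (monomial ` {m. mdeg m = 1})" for b
    unfolding cdim_def using ann_subset_forms forms_subset_span_monomials
    by (intro V.dim_le_card finite_imageI finite_monomials) blast
  then have "N \<subseteq> {..card (monomial ` {m. mdeg m = 1})}"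
    unfolding N_def by (simp add: image_subset_iff)
  then have fin_N: "finite N"
    using finite_subset by blast
  have "a \<in> K" using assms by (simp add: K_def)
  then have "Max N \<in> N" using fin_N by (intro Max_in) (auto simp: N_def)
  then obtain b where b: "b \<in> K" "cdim (ann b) = Max N" by (auto simp: N_def)
  have "ann_maximal b"
    unfolding ann_maximal_def
  proof (intro conjI allI impI)
    show "homogeneous b" "b \<notin> I" using b(1) by (auto simp: K_def)
    fix b' assume b': "homogeneous b' \<and> b' \<notin> I" "ann b \<subseteq> ann b'"
    then have "b' \<in> K" using b(1) by (auto simp: K_def)
    then have "cdim (ann b') \<le> cdim (ann b)"
      using fin_N b(2) by (simp add: N_def)
    moreover have "ann b' \<subseteq> V.span (monomial ` {m. mdeg m = 1})"
      using ann_subset_forms forms_subset_span_monomials by blast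
    ultimately show "ann b' = ann b"
      using V.subspace_eq_if_dim_le[OF ann_subspace b'(2) _ finite_imageI[OF finite_monomials]]
      unfolding cdim_def by blast
  qed
  then show ?thesis using that b(1) by (auto simp: K_def)
qed

lemma ann_maximal_mult:
  assumes "ann_maximal b" "homogeneous r" "r * b \<notin> I"
  shows "ann_maximal (r * b)" "ann (r * b) = ann b"
proof -
  have "homogeneous (r * b)"
    using assms(1,2) homogeneous_mult by (simp add: ann_maximal_def)
  then show eq: "ann (r * b) = ann b"
    using assms ann_mult unfolding ann_maximal_def by blast
  show "ann_maximal (r * b)"
    using assms \<open>homogeneous (r * b)\<close> unfolding ann_maximal_def eq by blast
qed

lemma ann_maximal_in_degree:
  assumes "ann_maximal b" "b \<in> forms e" "e \<le> D"
  obtains b' where "ann_maximal b'" "b' \<in> forms D" "ann b' = ann b"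
proof -
  have "b \<notin> I" using assms(1) by (simp add: ann_maximal_def)
  then obtain m where m: "mdeg m = D - e" "monomial m * b \<notin> I"
    using in_ideal_if_monomial_multiples by blast
  then have "homogeneous (monomial m)"
    using monomial_in_forms by (auto simp: homogeneous_def)
  moreover have "monomial m * b \<in> forms D"
    using forms_mult[OF monomial_in_forms[OF m(1)] assms(2)] assms(3) by simp
  ultimately show ?thesis
    using that ann_maximal_mult[OF assms(1) _ m(2)] by blast
qed

lemma relation_mult_in_ideal:
  assumes "finite A" "(\<Sum>i\<in>A. cscale (c i) (\<phi> i)) \<in> I"
  shows "(\<Sum>i\<in>{i \<in> A. x * \<phi> i \<notin> I}. cscale (c i) (x * \<phi> i)) \<in> I"
proof -
  let ?A' = "{i \<in> A. x * \<phi> i \<notin> I}"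
  have "(\<Sum>i\<in>?A'. cscale (c i) (x * \<phi> i))
      = (\<Sum>i\<in>A. cscale (c i) (x * \<phi> i)) - (\<Sum>i\<in>A - ?A'. cscale (c i) (x * \<phi> i))"
    using sum.subset_diff[of ?A' A "\<lambda>i. cscale (c i) (x * \<phi> i)"] assms(1) by simp
  moreover have "(\<Sum>i\<in>A. cscale (c i) (x * \<phi> i)) \<in> I"
    using ideal_mult[OF assms(2), of x] by (simp add: sum_distrib_left mult_cscale_right)
  moreover have "cscale (c i) (x * \<phi> i) \<in> I" if "i \<in> A - ?A'" for i
    using that V.subspace_scale[OF subspace_ideal] by simp
  then have "(\<Sum>i\<in>A - ?A'. cscale (c i) (x * \<phi> i)) \<in> I"
    by (rule V.subspace_sum[OF subspace_ideal])
  ultimately show ?thesis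
    using V.subspace_diff[OF subspace_ideal] by simp
qed

lemma ann_maximal_independent_mod:
  assumes "finite A" "\<forall>i\<in>A. ann_maximal (\<phi> i)" "inj_on (\<lambda>i. ann (\<phi> i)) A"
  shows "independent_mod I \<phi> A"
  using assms
proof (induction "card A" arbitrary: A \<phi> rule: less_induct)
  case less
  show ?case
    unfolding independent_mod_def
  proof (intro allI impI ballI)
    fix c k assume sum_in_I: "(\<Sum>i\<in>A. cscale (c i) (\<phi> i)) \<in> I" and k: "k \<in> A"
    show "c k = 0"
    proof (cases "A = {k}")
      case True
      then have "cscale (c k) (\<phi> k) \<in> I" using sum_in_I by simp
      moreover have "\<phi> k \<notin> I" using less.prems(2) k by (simp add: ann_maximal_def)
      ultimately show ?thesis
        using V.subspace_scale[OF subspace_ideal, of "cscale (c k) (\<phi> k)" "inverse (c k)"]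
        by (cases "c k = 0") auto
    next
      case False
      then obtain j where j: "j \<in> A" "j \<noteq> k" using k by blast
      have "ann (\<phi> j) \<noteq> ann (\<phi> k)"
        using inj_onD[OF less.prems(3)] j k by blast
      moreover have "ann_maximal (\<phi> j)" "ann_maximal (\<phi> k)"
        using less.prems(2) j(1) k by auto
      ultimately have "\<not> ann (\<phi> j) \<subseteq> ann (\<phi> k)"
        unfolding ann_maximal_def by blast
      \<comment> \<open>Multiplying the relation by \<open>x\<close> gives a relation on fewer elements that still involves \<open>k\<close>.\<close>
      then obtain x where x: "x \<in> forms 1" "x * \<phi> j \<in> I" "x * \<phi> k \<notin> I"
        by (auto simp: ann_def)
      define A' where "A' = {i \<in> A. x * \<phi> i \<notin> I}"
      have A': "A' \<subseteq> A" "j \<notin> A'" "k \<in> A'" using x(2,3) k by (auto simp: A'_def)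
      have "homogeneous x" using x(1) by (auto simp: homogeneous_def)
      have max': "ann_maximal (x * \<phi> i)" "ann (x * \<phi> i) = ann (\<phi> i)" if "i \<in> A'" for i
        using ann_maximal_mult[OF _ \<open>homogeneous x\<close>, of "\<phi> i"] less.prems(2) that
        unfolding A'_def by auto
      have "independent_mod I (\<lambda>i. x * \<phi> i) A'"
      proof (rule less.hyps)
        show "card A' < card A"
          using A'(1,2) j(1) less.prems(1) by (intro psubset_card_mono) auto
        show "finite A'" using A'(1) less.prems(1) by (rule finite_subset)
        show "\<forall>i\<in>A'. ann_maximal (x * \<phi> i)" using max' by blast
        show "inj_on (\<lambda>i. ann (x * \<phi> i)) A'"
          using inj_on_subset[OF less.prems(3) A'(1)] max'(2) by (simp add: inj_on_def)
      qed
      moreover have "(\<Sum>i\<in>A'. cscale (c i) (x * \<phi> i)) \<in> I"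
        unfolding A'_def by (rule relation_mult_in_ideal[OF less.prems(1) sum_in_I])
      ultimately show "c k = 0"
        by (rule independent_modD[OF _ _ A'(3)])
    qed
  qed
qed

lemma ann_maximal_family_card_le:
  assumes stable: "\<forall>D\<ge>d0. hilbert_function I D = n"
    and A: "finite A" "\<forall>i\<in>A. ann_maximal (\<phi> i)" "inj_on (\<lambda>i. ann (\<phi> i)) A"
  shows "card A \<le> n"
proof -
  have "\<forall>i\<in>A. \<exists>d. \<phi> i \<in> forms d"
    using A(2) by (simp add: ann_maximal_def homogeneous_def)
  from bchoice[OF this] obtain e where e: "\<forall>i\<in>A. \<phi> i \<in> forms (e i)"
    by blast
  define D where "D = max d0 (Max (e ` A))"
  have e_le: "e i \<le> D" if "i \<in> A" for i
  proof -
    have "e i \<le> Max (e ` A)" using A(1) that by (intro Max_ge) auto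
    then show ?thesis by (simp add: D_def)
  qed
  have "\<exists>b. ann_maximal b \<and> b \<in> forms D \<and> ann b = ann (\<phi> i)" if "i \<in> A" for i
    by (rule ann_maximal_in_degree[of "\<phi> i" "e i" D]) (use that A(2) e e_le in auto)
  then have "\<forall>i\<in>A. \<exists>b. ann_maximal b \<and> b \<in> forms D \<and> ann b = ann (\<phi> i)" by blast
  from bchoice[OF this] obtain \<psi>
    where \<psi>: "\<forall>i\<in>A. ann_maximal (\<psi> i) \<and> \<psi> i \<in> forms D \<and> ann (\<psi> i) = ann (\<phi> i)"
    by blast
  have "inj_on (\<lambda>i. ann (\<psi> i)) A"
    using A(3) \<psi> unfolding inj_on_def by simp
  then have "independent_mod I \<psi> A"
    using \<psi> by (intro ann_maximal_independent_mod[OF A(1)]) blast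
  moreover have "\<psi> ` A \<subseteq> forms D" using \<psi> by blast
  ultimately have "card A + cdim (I \<inter> forms D) \<le> cdim (forms D)"
    by (rule independent_mod_card_le[OF subspace_ideal A(1) _ _ forms_subset_span_monomials
          finite_imageI[OF finite_monomials]])
  moreover have "hilbert_function I D = n" using stable by (simp add: D_def)
  ultimately show ?thesis unfolding hilbert_function_def by linarith
qed

lemma finite_maximal_annihilators:
  assumes stable: "\<forall>D\<ge>d0. hilbert_function I D = n"
  shows "finite {ann b | b. ann_maximal b}"
proof (rule ccontr)
  assume "infinite {ann b | b. ann_maximal b}"
  from infinite_arbitrarily_large[OF this, of "Suc n"]
  obtain \<S> where \<S>: "\<S> \<subseteq> {ann b | b. ann_maximal b}" "finite \<S>" "card \<S> = Suc n"
    by (elim exE conjE) simp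
  define rep where "rep L = (SOME b. ann_maximal b \<and> ann b = L)" for L
  have rep: "ann_maximal (rep L) \<and> ann (rep L) = L" if "L \<in> \<S>" for L
  proof -
    have "\<exists>b. ann_maximal b \<and> ann b = L" using that \<S>(1) by blast
    then show ?thesis unfolding rep_def by (rule someI_ex)
  qed
  then have "inj_on (\<lambda>L. ann (rep L)) \<S>"
    by (intro inj_onI) simp
  then have "card \<S> \<le> n"
    using rep by (intro ann_maximal_family_card_le[OF stable \<S>(2), where \<phi> = rep]) auto
  then show False using \<S>(3) by simp
qed

lemma linear_nonzerodivisor_exists:
  assumes stable: "\<forall>D\<ge>d0. hilbert_function I D = n"
  obtains l where "l \<in> forms 1" "\<And>g. homogeneous g \<Longrightarrow> l * g \<in> I \<Longrightarrow> g \<in> I"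
proof -
  have "V.subspace L \<and> \<not> forms 1 \<subseteq> L" if "L \<in> {ann b | b. ann_maximal b}" for L
    using that ann_subspace forms_1_not_subset_ann by (auto simp: ann_maximal_def)
  then obtain l where l: "l \<in> forms 1" "l \<notin> \<Union>{ann b | b. ann_maximal b}"
    using V.subspace_avoids_finite_Union[OF infinite_UNIV_char_0 forms_subspace
        finite_maximal_annihilators[OF stable]] by blast
  have "g \<in> I" if g: "homogeneous g" "l * g \<in> I" for g
  proof (rule ccontr)
    assume "g \<notin> I"
    then obtain b where "ann_maximal b" "ann g \<subseteq> ann b"
      using ann_maximal_exists g(1) by blast
    moreover have "l \<in> ann g" using l(1) g(2) by (simp add: ann_def)
    ultimately show False using l(2) by blast
  qed
  then show ?thesis using that l(1) by blast
qed

lemma hilbert_function_mono: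
  assumes stable: "\<forall>D\<ge>d0. hilbert_function I D = n"
  shows "mono (hilbert_function I)"
proof -
  obtain l where "l \<in> forms 1" "\<And>g. homogeneous g \<Longrightarrow> l * g \<in> I \<Longrightarrow> g \<in> I"
    using linear_nonzerodivisor_exists[OF stable] by blast
  then show ?thesis
    unfolding mono_iff_le_Suc homogeneous_def
    using hilbert_function_le_Suc_if_nonzerodivisor[OF homogeneous_ideal] by blast
qed

end

theorem lemma4p2:
  fixes f :: pol and I\<Gamma> :: "pol set"
  assumes "f \<in> forms 4"
    and "\<forall>g\<in>forms 2. contract g f = 0 \<longrightarrow> g = 0"
    and "scheme_ideal_of_length 10 I\<Gamma>"
    and "I\<Gamma> \<subseteq> perp f"
  shows "cdim (I\<Gamma> \<inter> forms 3) = 10"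
proof -
  obtain d0 where ideal: "saturated_homogeneous_ideal I\<Gamma>"
    and stable: "\<forall>d\<ge>d0. hilbert_function I\<Gamma> d = 10"
    using assms(3) unfolding scheme_ideal_of_length_def hilbert_function_def
    by (auto intro: saturated_homogeneous_ideal.intro)
  then have mono: "mono (hilbert_function I\<Gamma>)"
    using saturated_homogeneous_ideal.hilbert_function_mono by blast
  have "I\<Gamma> \<inter> forms 2 = {0}"
    using assms(2,4) V.subspace_0[OF saturated_homogeneous_ideal.subspace_ideal[OF ideal]]
      V.subspace_0[OF forms_subspace] by (auto simp: perp_def)
  then have "hilbert_function I\<Gamma> 2 = 10"
    by (simp add: hilbert_function_def cdim_forms_2 cdim_zero)
  moreover have "hilbert_function I\<Gamma> 3 \<le> hilbert_function I\<Gamma> (max 3 d0)"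
    using mono by (simp add: monoD)
  moreover have "hilbert_function I\<Gamma> 2 \<le> hilbert_function I\<Gamma> 3"
    using mono by (simp add: monoD)
  ultimately have "hilbert_function I\<Gamma> 3 = 10"
    using stable by simp
  then show ?thesis
    by (simp add: hilbert_function_def cdim_forms_3)
qed

end
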